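(* Let $R$ be a commutative ring with $1\neq 0$, $S\subseteq R$ a multiplicatively closed subset, and $M$ a finitely generated faithful multiplication $R$-module. For an ideal $I$ of $R$, the submodule $IM$ is an $S$-quasi-copure submodule of $M$ if and only if $I$ is an $S$-quasi-copure ideal of $R$ (i.e., an $S$-quasi-copure submodule of the $R$-module $R$).
   Context: All rings are commutative with $1\neq 0$ and all modules are unital. A multiplicatively closed subset (m.c.s.) $S$ of $R$ is a subset with $0\notin S$, $1\in S$, and $ss'\in S$ for all $s,s'\in S$. $M$ is a multiplication module if every submodule of $M$ equals $JM$ for some ideal $J$; faithful means $\mathrm{Ann}_R(M)=0$. For an ideal $I$ and submodule $L$, $(L:_M I)=\{m\in M: Im\subseteq L\}$, $(0:_M I)=\{m\in M: Im=0\}$, $(L:_R M)=\{r\in R: rM\subseteq L\}$. A submodule $P$ of $M$ with $(P:_R M)\cap S=\emptyset$ is $S$-prime if there exists $s\in S$ such that whenever $am\in P$ ($a\in R$, $m\in M$), then $sa\in(P:_R M)$ or $sm\in P$; $S$-prime ideals are $S$-prime submodules of $R$. A submodule $L$ of $M$ is $S$-copure if there exists $s\in S$ such that $s(L:_M I)\subseteq L+(0:_M I)$ for every ideal $I$ of $R$. A submodule $N$ of $M$ is $S$-quasi-copure if every $S$-prime submodule of $M$ containing $N$ is $S$-copure. *)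

theory Defs
  imports Main "HOL.Modules"
begin

text \<open>The ring R is a type 'a of class comm_ring_1 (so 1 \<noteq> 0); an R-module M is a type 'b
  with scalar multiplication sc satisfying the locale module sc (HOL.Modules).\<close>

definition mcs :: "'a::comm_ring_1 set \<Rightarrow> bool" where
  "mcs S \<longleftrightarrow> 0 \<notin> S \<and> 1 \<in> S \<and> (\<forall>s\<in>S. \<forall>t\<in>S. s * t \<in> S)"

definition is_ideal :: "'a::comm_ring_1 set \<Rightarrow> bool" where
  "is_ideal I \<longleftrightarrow> module.subspace ((*) :: 'a \<Rightarrow> 'a \<Rightarrow> 'a) I"

definition colonR :: "('a::comm_ring_1 \<Rightarrow> 'b::ab_group_add \<Rightarrow> 'b) \<Rightarrow> 'b set \<Rightarrow> 'a set" where
  "colonR sc L = {r. \<forall>m. sc r m \<in> L}"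

definition colonM :: "('a::comm_ring_1 \<Rightarrow> 'b::ab_group_add \<Rightarrow> 'b) \<Rightarrow> 'b set \<Rightarrow> 'a set \<Rightarrow> 'b set" where
  "colonM sc L I = {m. \<forall>a\<in>I. sc a m \<in> L}"

definition ideal_times :: "('a::comm_ring_1 \<Rightarrow> 'b::ab_group_add \<Rightarrow> 'b) \<Rightarrow> 'a set \<Rightarrow> 'b set" where
  "ideal_times sc I = module.span sc {sc a m | a m. a \<in> I}"

definition faithful :: "('a::comm_ring_1 \<Rightarrow> 'b::ab_group_add \<Rightarrow> 'b) \<Rightarrow> bool" where
  "faithful sc \<longleftrightarrow> colonR sc {0} = {0}"

definition fin_gen :: "('a::comm_ring_1 \<Rightarrow> 'b::ab_group_add \<Rightarrow> 'b) \<Rightarrow> bool" where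
  "fin_gen sc \<longleftrightarrow> (\<exists>F. finite F \<and> module.span sc F = UNIV)"

definition multiplication_module :: "('a::comm_ring_1 \<Rightarrow> 'b::ab_group_add \<Rightarrow> 'b) \<Rightarrow> bool" where
  "multiplication_module sc \<longleftrightarrow>
     (\<forall>N. module.subspace sc N \<longrightarrow> (\<exists>J. is_ideal J \<and> N = ideal_times sc J))"

definition S_prime :: "('a::comm_ring_1 \<Rightarrow> 'b::ab_group_add \<Rightarrow> 'b) \<Rightarrow> 'a set \<Rightarrow> 'b set \<Rightarrow> bool" where
  "S_prime sc S P \<longleftrightarrow> module.subspace sc P \<and> colonR sc P \<inter> S = {} \<and>
     (\<exists>s\<in>S. \<forall>a m. sc a m \<in> P \<longrightarrow> s * a \<in> colonR sc P \<or> sc s m \<in> P)"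

definition S_copure :: "('a::comm_ring_1 \<Rightarrow> 'b::ab_group_add \<Rightarrow> 'b) \<Rightarrow> 'a set \<Rightarrow> 'b set \<Rightarrow> bool" where
  "S_copure sc S L \<longleftrightarrow> module.subspace sc L \<and>
     (\<exists>s\<in>S. \<forall>I. is_ideal I \<longrightarrow>
        sc s ` colonM sc L I \<subseteq> {x + y | x y. x \<in> L \<and> y \<in> colonM sc {0} I})"

definition S_quasi_copure :: "('a::comm_ring_1 \<Rightarrow> 'b::ab_group_add \<Rightarrow> 'b) \<Rightarrow> 'a set \<Rightarrow> 'b set \<Rightarrow> bool" where
  "S_quasi_copure sc S N \<longleftrightarrow> module.subspace sc N \<and>
     (\<forall>P. S_prime sc S P \<and> N \<subseteq> P \<longrightarrow> S_copure sc S P)"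

end

theory Submission imports Defs begin

(* For a finitely generated faithful multiplication module M the maps P \<mapsto> (P :_R M) and
   Q \<mapsto> QM are mutually inverse, inclusion-preserving bijections between submodules of M and
   ideals of R: every submodule is (P :_R M)M by the multiplication property, and the cancellation
   law (QM :_R M) = Q holds. The latter is checked locally: for a maximal ideal P there are m and
   p \<in> P with (1 - p)M \<subseteq> Rm, since otherwise M = PM, so every element is fixed by some element
   of P, and the product of the 1 - p over finitely many generators would annihilate M.
   The bijection carries S-prime submodules to S-prime ideals, and, since (P :_M I), (0 :_M I) and
   sums of submodules correspond to the matching ideals, S-copure submodules to S-copure ideals;
   quantifying over S-primes above IM is then the same as quantifying over S-primes above I. *)

lemma module_mult: "module ((*) :: 'a::comm_ring_1 \<Rightarrow> 'a \<Rightarrow> 'a)"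
  by unfold_locales (auto simp: algebra_simps)

lemma is_ideal_iff: "is_ideal (I::'a::comm_ring_1 set) \<longleftrightarrow>
   0 \<in> I \<and> (\<forall>x\<in>I. \<forall>y\<in>I. x + y \<in> I) \<and> (\<forall>c. \<forall>x\<in>I. c * x \<in> I)"
  unfolding is_ideal_def module.subspace_def[OF module_mult] by blast

lemma idealD:
  assumes "is_ideal (I::'a::comm_ring_1 set)"
  shows "0 \<in> I" "x \<in> I \<Longrightarrow> y \<in> I \<Longrightarrow> x + y \<in> I" "x \<in> I \<Longrightarrow> c * x \<in> I"
    "x \<in> I \<Longrightarrow> x * c \<in> I"
  using assms by (auto simp: is_ideal_iff mult.commute)

lemma colonR_mult: "is_ideal Q \<Longrightarrow> colonR ((*) :: 'a::comm_ring_1 \<Rightarrow> 'a \<Rightarrow> 'a) Q = Q"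
  unfolding colonR_def using idealD(4) by (auto, metis mult_1_right)

definition maximal_ideal :: "'a::comm_ring_1 set \<Rightarrow> bool" where
  "maximal_ideal P \<longleftrightarrow> is_ideal P \<and> 1 \<notin> P \<and> (\<forall>a. a \<notin> P \<longrightarrow> (\<exists>p\<in>P. \<exists>r. 1 = p + r * a))"

lemma maximal_ideal_prime:
  assumes "maximal_ideal P" "a * b \<in> P" "a \<notin> P" shows "b \<in> P"
proof -
  obtain p r where p: "p \<in> P" "1 = p + r * a" using assms unfolding maximal_ideal_def by blast
  have "b = p * b + r * (a * b)" using p(2) by (metis mult.assoc mult_1 distrib_right)
  moreover have "p * b \<in> P" "r * (a * b) \<in> P"
    using assms p idealD[of P] unfolding maximal_ideal_def by auto
  ultimately show ?thesis using assms idealD[of P] unfolding maximal_ideal_def by metis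
qed

lemma is_ideal_Union_chain:
  assumes "C \<noteq> {}" "\<And>X. X \<in> C \<Longrightarrow> is_ideal X" "\<And>X Y. X \<in> C \<Longrightarrow> Y \<in> C \<Longrightarrow> X \<subseteq> Y \<or> Y \<subseteq> X"
  shows "is_ideal (\<Union>C)"
  unfolding is_ideal_iff
proof (intro conjI ballI allI)
  show "0 \<in> \<Union>C" using assms(1,2) idealD(1) by blast
next
  fix x y assume "x \<in> \<Union>C" "y \<in> \<Union>C"
  then obtain X Y where "X \<in> C" "Y \<in> C" "x \<in> X" "y \<in> Y" by blast
  then show "x + y \<in> \<Union>C" using assms(2,3) idealD(2) by (metis UnionI subsetD)
next
  fix c x assume "x \<in> \<Union>C"
  then show "c * x \<in> \<Union>C" using assms(2) idealD(3) by blast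
qed

lemma is_ideal_add_multiples:
  assumes "is_ideal M" shows "is_ideal {p + r * a | p r. p \<in> M}"
  unfolding is_ideal_iff
proof (intro conjI ballI allI)
  have "(0::'a) = 0 + 0 * a" by simp
  then show "0 \<in> {p + r * a | p r. p \<in> M}" using idealD(1)[OF assms] by blast
next
  fix x y assume "x \<in> {p + r * a | p r. p \<in> M}" "y \<in> {p + r * a | p r. p \<in> M}"
  then obtain p r p' r' where "x = p + r * a" "y = p' + r' * a" "p \<in> M" "p' \<in> M" by blast
  moreover from this have "x + y = (p + p') + (r + r') * a" by (simp add: algebra_simps)
  ultimately show "x + y \<in> {p + r * a | p r. p \<in> M}" using idealD(2)[OF assms] by blast
next
  fix c x assume "x \<in> {p + r * a | p r. p \<in> M}"
  then obtain p r where "x = p + r * a" "p \<in> M" by blast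
  moreover from this have "c * x = c * p + (c * r) * a" by (simp add: algebra_simps)
  ultimately show "c * x \<in> {p + r * a | p r. p \<in> M}" using idealD(3)[OF assms] by blast
qed

lemma ex_maximal_ideal_superset:
  assumes "is_ideal (K::'a::comm_ring_1 set)" "1 \<notin> K"
  shows "\<exists>P. maximal_ideal P \<and> K \<subseteq> P"
proof -
  let ?A = "{Q. is_ideal Q \<and> K \<subseteq> Q \<and> (1::'a) \<notin> Q}"
  have "\<exists>M\<in>?A. \<forall>X\<in>?A. M \<subseteq> X \<longrightarrow> X = M"
  proof (rule subset_Zorn)
    fix C assume "subset.chain ?A C"
    then have sub: "C \<subseteq> ?A" and lin: "\<And>X Y. X \<in> C \<Longrightarrow> Y \<in> C \<Longrightarrow> X \<subseteq> Y \<or> Y \<subseteq> X"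
      by (auto simp: subset_chain_def)
    show "\<exists>U\<in>?A. \<forall>X\<in>C. X \<subseteq> U"
    proof (cases "C = {}")
      case True then show ?thesis using assms by blast
    next
      case False
      have "is_ideal (\<Union>C)" using is_ideal_Union_chain[OF False] sub lin by blast
      moreover have "K \<subseteq> \<Union>C" "1 \<notin> \<Union>C" using False sub by blast+
      ultimately show ?thesis by blast
    qed
  qed
  then obtain M where M: "M \<in> ?A" and max: "\<forall>X\<in>?A. M \<subseteq> X \<longrightarrow> X = M" ..
  have "\<exists>p\<in>M. \<exists>r. 1 = p + r * a" if a: "a \<notin> M" for a
  proof (rule ccontr)
    let ?Q = "{p + r * a | p r. p \<in> M}"
    assume "\<not> (\<exists>p\<in>M. \<exists>r. 1 = p + r * a)"
    then have "1 \<notin> ?Q" by blast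
    have MQ: "M \<subseteq> ?Q"
    proof
      fix x assume "x \<in> M"
      moreover have "x = x + 0 * a" by simp
      ultimately show "x \<in> ?Q" by blast
    qed
    have "is_ideal ?Q" using M by (intro is_ideal_add_multiples) simp
    then have "?Q \<in> ?A" using M MQ \<open>1 \<notin> ?Q\<close> by auto
    then have "?Q = M" using max MQ by blast
    moreover have "a \<in> ?Q"
    proof -
      have "a = 0 + 1 * a" by simp
      then show ?thesis using M idealD(1) by blast
    qed
    ultimately show False using a by simp
  qed
  then show ?thesis using M unfolding maximal_ideal_def by auto
qed

context module
begin

lemma subspace_ideal_times: "subspace (ideal_times scale J)"
  unfolding ideal_times_def by simp

lemma scale_in_ideal_times: "a \<in> J \<Longrightarrow> scale a m \<in> ideal_times scale J"
  unfolding ideal_times_def by (rule span_base) blast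

lemma ideal_times_minimal:
  "subspace N \<Longrightarrow> (\<And>a m. a \<in> J \<Longrightarrow> scale a m \<in> N) \<Longrightarrow> ideal_times scale J \<subseteq> N"
  unfolding ideal_times_def by (rule span_minimal) auto

lemma ideal_times_induct[consumes 1, case_names subspace scale]:
  assumes "x \<in> ideal_times scale J" "subspace (Collect P)" "\<And>a m. a \<in> J \<Longrightarrow> P (scale a m)"
  shows "P x"
  using ideal_times_minimal[OF assms(2), of J] assms(1,3) by blast

lemma ideal_times_mono: "J \<subseteq> K \<Longrightarrow> ideal_times scale J \<subseteq> ideal_times scale K"
  by (rule ideal_times_minimal[OF subspace_ideal_times]) (auto intro: scale_in_ideal_times)

lemma subspace_scale_preimage:
  assumes "subspace N" shows "subspace {x. scale s x \<in> N}"
proof (rule subspaceI)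
  show "0 \<in> {x. scale s x \<in> N}" using subspace_0[OF assms] by simp
  show "x + y \<in> {x. scale s x \<in> N}" if "x \<in> {x. scale s x \<in> N}" "y \<in> {x. scale s x \<in> N}" for x y
    using that subspace_add[OF assms] by (simp add: scale_right_distrib)
  show "scale c x \<in> {x. scale s x \<in> N}" if "x \<in> {x. scale s x \<in> N}" for c x
    using that subspace_scale[OF assms, of "scale s x" c] by (simp add: mult.commute)
qed

lemma subspace_colonM: assumes "subspace N" shows "subspace (colonM scale N I)"
proof -
  have "colonM scale N I = (\<Inter>a\<in>I. {x. scale a x \<in> N})" unfolding colonM_def by auto
  then show ?thesis by (simp add: subspace_Int subspace_scale_preimage[OF assms])
qed

lemma subspace_set_plus:
  assumes "subspace A" "subspace B" shows "subspace {x + y | x y. x \<in> A \<and> y \<in> B}"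
proof -
  have "span A = A" "span B = B" using assms by simp_all
  then have "{x + y | x y. x \<in> A \<and> y \<in> B} = span (A \<union> B)"
    using span_Un[of A B] by (simp del: span_eq_iff)
  then show ?thesis by simp
qed

lemma is_ideal_colonR: assumes "subspace N" shows "is_ideal (colonR scale N)"
  unfolding is_ideal_iff colonR_def using assms
  by (auto simp: subspace_0 subspace_add scale_left_distrib subspace_scale simp flip: scale_scale)

lemma ideal_times_colonR:
  assumes "multiplication_module scale" "subspace N"
  shows "ideal_times scale (colonR scale N) = N"
proof
  obtain J where J: "is_ideal J" "N = ideal_times scale J"
    using assms unfolding multiplication_module_def by blast
  have "J \<subseteq> colonR scale N" unfolding colonR_def using J(2) scale_in_ideal_times by blast
  then show "N \<subseteq> ideal_times scale (colonR scale N)" using J(2) ideal_times_mono by blast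
  show "ideal_times scale (colonR scale N) \<subseteq> N"
    by (rule ideal_times_minimal[OF assms(2)]) (auto simp: colonR_def)
qed

lemma all_subspaces_iff_all_ideal_times:
  assumes "multiplication_module scale"
  shows "(\<forall>N. subspace N \<longrightarrow> \<Phi> N) \<longleftrightarrow> (\<forall>J. is_ideal J \<longrightarrow> \<Phi> (ideal_times scale J))"
  using assms subspace_ideal_times unfolding multiplication_module_def by metis

lemma faithfulD: "faithful scale \<Longrightarrow> (\<And>x. scale u x = 0) \<Longrightarrow> u = 0"
  unfolding faithful_def colonR_def by blast

lemma subspace_scale_image: "is_ideal J \<Longrightarrow> subspace ((\<lambda>a. scale a m) ` J)"
  by (rule module_hom.subspace_image[of "(*)" scale])
    (auto simp: module_hom_iff module_mult module_axioms scale_left_distrib is_ideal_def)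

lemma ex_absorbing_scalar:
  assumes mm: "multiplication_module scale" and P: "is_ideal P"
    and PM: "ideal_times scale P = UNIV"
  shows "\<exists>p\<in>P. scale p m = m"
proof -
  let ?Pm = "(\<lambda>p. scale p m) ` P"
  have "ideal_times scale (colonR scale (span {m})) \<subseteq> ?Pm"
  proof (rule ideal_times_minimal[OF subspace_scale_image[OF P]])
    fix c y assume c: "c \<in> colonR scale (span {m})"
    have "y \<in> ideal_times scale P" using PM by simp
    then show "scale c y \<in> ?Pm"
    proof (induct rule: ideal_times_induct)
      case subspace show ?case by (rule subspace_scale_preimage[OF subspace_scale_image[OF P]])
    next
      case (scale q z)
      obtain k where "scale c z = scale k m" using c unfolding colonR_def span_singleton by blast
      then have "scale c (scale q z) = scale (q * k) m" by (metis scale_left_commute scale_scale)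
      then show ?case using idealD(4)[OF P scale] by blast
    qed
  qed
  moreover have "m \<in> ideal_times scale (colonR scale (span {m}))"
    using ideal_times_colonR[OF mm, of "span {m}"] span_base[of m "{m}"] by simp
  ultimately show ?thesis by (metis imageE subsetD)
qed

lemma ex_not_absorbed_by_prime_ideal:
  assumes fg: "fin_gen scale" and ff: "faithful scale"
    and P: "is_ideal P" "1 \<notin> P" and prime: "\<And>a b. a * b \<in> P \<Longrightarrow> a \<in> P \<or> b \<in> P"
  shows "\<exists>m. \<forall>p\<in>P. scale p m \<noteq> m"
proof (rule ccontr)
  assume "\<not> ?thesis"
  then obtain pf where pf: "\<And>m. pf m \<in> P" "\<And>m. scale (pf m) m = m" by metis
  obtain F where F: "finite F" "span F = UNIV" using fg unfolding fin_gen_def by blast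
  define u where "u = (\<Prod>f\<in>F. 1 - pf f)"
  have factor_notin: "1 - pf f \<notin> P" for f
    using idealD(2)[OF P(1) _ pf(1)[of f]] P(2) by fastforce
  have "(\<Prod>f\<in>G. 1 - pf f) \<notin> P" if "finite G" for G
    using that by (induct G rule: finite_induct) (use P(2) factor_notin prime in auto)
  then have "u \<notin> P" using F(1) u_def by simp
  have "scale u f = 0" if "f \<in> F" for f
  proof -
    have "u = (\<Prod>g\<in>F - {f}. 1 - pf g) * (1 - pf f)"
      unfolding u_def using prod.remove[OF F(1) that] by (simp add: mult.commute)
    moreover have "scale (1 - pf f) f = 0" using pf(2)[of f] by (simp add: scale_left_diff_distrib)
    ultimately show ?thesis by (metis scale_scale scale_zero_right)
  qed
  then have "scale u x = 0" for x
    using F(2) span_induct[of x F "\<lambda>x. scale u x \<in> {0}"] subspace_scale_preimage[of "{0}" u]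
    by auto
  then have "u = 0" by (rule faithfulD[OF ff])
  then show False using \<open>u \<notin> P\<close> idealD(1)[OF P(1)] by simp
qed

lemma locally_cyclic:
  assumes fg: "fin_gen scale" and ff: "faithful scale" and mm: "multiplication_module scale"
    and P: "maximal_ideal P"
  shows "\<exists>m p. p \<in> P \<and> (\<forall>x. \<exists>r. scale (1 - p) x = scale r m)"
proof (rule ccontr)
  assume not_cyclic: "\<not> ?thesis"
  have PI: "is_ideal P" using P by (simp add: maximal_ideal_def)
  have colon_in_P: "colonR scale (span {m}) \<subseteq> P" for m
  proof
    fix a assume "a \<in> colonR scale (span {m})"
    then have a: "\<forall>x. \<exists>r. scale a x = scale r m" unfolding colonR_def span_singleton by auto
    show "a \<in> P"
    proof (rule ccontr)
      assume "a \<notin> P"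
      then obtain p r where p: "p \<in> P" "1 = p + r * a" using P unfolding maximal_ideal_def by blast
      have "\<exists>k. scale (1 - p) x = scale k m" for x
      proof -
        obtain k where "scale a x = scale k m" using a by blast
        then have "scale (1 - p) x = scale (r * k) m" using p(2)
          by (metis add_diff_cancel_left' scale_scale)
        then show ?thesis by blast
      qed
      then show False using not_cyclic p(1) by blast
    qed
  qed
  have "y \<in> ideal_times scale P" for y
  proof -
    have "y \<in> ideal_times scale (colonR scale (span {y}))"
      using ideal_times_colonR[OF mm, of "span {y}"] span_base[of y "{y}"] by simp
    then show ?thesis using ideal_times_mono[OF colon_in_P] by blast
  qed
  then have "\<forall>m. \<exists>p\<in>P. scale p m = m" using ex_absorbing_scalar[OF mm PI] by blast
  moreover have "\<exists>m. \<forall>p\<in>P. scale p m \<noteq> m"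
    using P maximal_ideal_prime[OF P]
    by (intro ex_not_absorbed_by_prime_ideal[OF fg ff PI]) (auto simp: maximal_ideal_def)
  ultimately show False by blast
qed

lemma scale_ideal_times_in_cyclic:
  assumes J: "is_ideal J" and q: "\<forall>x. \<exists>r. scale q x = scale r m"
    and z: "z \<in> ideal_times scale J"
  shows "scale q z \<in> (\<lambda>j. scale j m) ` J"
  using z
proof (induct rule: ideal_times_induct)
  case subspace show ?case by (rule subspace_scale_preimage[OF subspace_scale_image[OF J]])
next
  case (scale c y)
  obtain r where "scale q y = scale r m" using q by blast
  then have "scale q (scale c y) = scale (c * r) m" by (metis scale_left_commute scale_scale)
  then show ?case using idealD(4)[OF J scale] by blast
qed

lemma ex_multiplier_notin_maximal_ideal:
  assumes fg: "fin_gen scale" and ff: "faithful scale" and mm: "multiplication_module scale"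
    and J: "is_ideal J" and P: "maximal_ideal P"
    and a: "a \<in> colonR scale (ideal_times scale J)"
  shows "\<exists>r. r \<notin> P \<and> a * r \<in> J"
proof -
  obtain m p where p: "p \<in> P" and cyclic: "\<forall>x. \<exists>r. scale (1 - p) x = scale r m"
    using locally_cyclic[OF fg ff mm P] by blast
  define q where "q = 1 - p"
  obtain j where j: "j \<in> J" "scale q (scale a m) = scale j m"
    using scale_ideal_times_in_cyclic[OF J, of q m "scale a m"] a cyclic
    unfolding colonR_def q_def by blast
  define d where "d = q * a - j"
  have "scale d m = 0" using j(2) unfolding d_def by (simp add: scale_left_diff_distrib)
  then have "scale (d * q) x = 0" for x
    using cyclic unfolding q_def by (metis mult.commute scale_left_commute scale_scale scale_zero_right)
  then have "d * q = 0" by (rule faithfulD[OF ff])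
  then have "a * (q * q) = j * q" unfolding d_def by (simp add: algebra_simps)
  then have "a * (q * q) \<in> J" using idealD(4)[OF J j(1)] by simp
  moreover have "q \<notin> P"
  proof
    assume "q \<in> P"
    then have "q + p \<in> P" using idealD(2) P p unfolding maximal_ideal_def by blast
    then show False using P q_def by (simp add: maximal_ideal_def)
  qed
  then have "q * q \<notin> P" using maximal_ideal_prime[OF P] by blast
  ultimately show ?thesis by blast
qed

lemma colonR_ideal_times:
  assumes fg: "fin_gen scale" and ff: "faithful scale" and mm: "multiplication_module scale"
    and J: "is_ideal J"
  shows "colonR scale (ideal_times scale J) = J"
proof
  show "J \<subseteq> colonR scale (ideal_times scale J)"
    unfolding colonR_def using scale_in_ideal_times by blast
  show "colonR scale (ideal_times scale J) \<subseteq> J"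
  proof
    fix a assume a: "a \<in> colonR scale (ideal_times scale J)"
    show "a \<in> J"
    proof (rule ccontr)
      assume "a \<notin> J"
      have "is_ideal {r. a * r \<in> J}"
        using module.subspace_colonM[OF module_mult, of J "{a}"] J
        by (simp add: is_ideal_def colonM_def)
      moreover have "1 \<notin> {r. a * r \<in> J}" using \<open>a \<notin> J\<close> by simp
      ultimately obtain P where "maximal_ideal P" "{r. a * r \<in> J} \<subseteq> P"
        using ex_maximal_ideal_superset by blast
      then show False using ex_multiplier_notin_maximal_ideal[OF fg ff mm J _ a] by blast
    qed
  qed
qed

lemma ideal_times_subset_iff:
  assumes fg: "fin_gen scale" and ff: "faithful scale" and mm: "multiplication_module scale"
    and I: "is_ideal I" and J: "is_ideal J"
  shows "ideal_times scale I \<subseteq> ideal_times scale J \<longleftrightarrow> I \<subseteq> J"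
proof
  assume "ideal_times scale I \<subseteq> ideal_times scale J"
  then have "colonR scale (ideal_times scale I) \<subseteq> colonR scale (ideal_times scale J)"
    unfolding colonR_def by blast
  then show "I \<subseteq> J" using colonR_ideal_times[OF fg ff mm] I J by simp
qed (rule ideal_times_mono)

lemma ideal_times_set_plus:
  assumes Q: "is_ideal Q" and Z: "is_ideal Z"
  shows "ideal_times scale {x + y | x y. x \<in> Q \<and> y \<in> Z} =
    {x + y | x y. x \<in> ideal_times scale Q \<and> y \<in> ideal_times scale Z}"
proof
  show "ideal_times scale {x + y | x y. x \<in> Q \<and> y \<in> Z} \<subseteq>
    {x + y | x y. x \<in> ideal_times scale Q \<and> y \<in> ideal_times scale Z}"
  proof (rule ideal_times_minimal[OF subspace_set_plus[OF subspace_ideal_times subspace_ideal_times]])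
    fix a m assume "a \<in> {x + y | x y. x \<in> Q \<and> y \<in> Z}"
    then obtain x y where "a = x + y" "x \<in> Q" "y \<in> Z" by blast
    moreover from this have "scale a m = scale x m + scale y m" by (simp add: scale_left_distrib)
    ultimately show "scale a m \<in> {x + y | x y. x \<in> ideal_times scale Q \<and> y \<in> ideal_times scale Z}"
      using scale_in_ideal_times[of x Q m] scale_in_ideal_times[of y Z m] by blast
  qed
  have "x \<in> {x + y | x y. x \<in> Q \<and> y \<in> Z}" if "x \<in> Q" for x
  proof -
    have "x = x + 0" by simp
    then show ?thesis using that idealD(1)[OF Z] by blast
  qed
  then have QM: "ideal_times scale Q \<subseteq> ideal_times scale {x + y | x y. x \<in> Q \<and> y \<in> Z}"
    by (intro ideal_times_mono) blast
  have "y \<in> {x + y | x y. x \<in> Q \<and> y \<in> Z}" if "y \<in> Z" for y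
  proof -
    have "y = 0 + y" by simp
    then show ?thesis using that idealD(1)[OF Q] by blast
  qed
  then have ZM: "ideal_times scale Z \<subseteq> ideal_times scale {x + y | x y. x \<in> Q \<and> y \<in> Z}"
    by (intro ideal_times_mono) blast
  show "{x + y | x y. x \<in> ideal_times scale Q \<and> y \<in> ideal_times scale Z} \<subseteq>
    ideal_times scale {x + y | x y. x \<in> Q \<and> y \<in> Z}"
    using QM ZM subspace_add[OF subspace_ideal_times] by blast
qed

lemma scale_image_ideal_times_subset_iff:
  assumes fg: "fin_gen scale" and ff: "faithful scale" and mm: "multiplication_module scale"
    and K: "is_ideal K" and L: "is_ideal L"
  shows "scale s ` ideal_times scale K \<subseteq> ideal_times scale L \<longleftrightarrow> (*) s ` K \<subseteq> L"
proof
  assume "scale s ` ideal_times scale K \<subseteq> ideal_times scale L"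
  then have "s * k \<in> colonR scale (ideal_times scale L)" if "k \<in> K" for k
    using that scale_in_ideal_times unfolding colonR_def by (fastforce simp flip: scale_scale)
  then show "(*) s ` K \<subseteq> L" using colonR_ideal_times[OF fg ff mm L] by auto
next
  assume sK: "(*) s ` K \<subseteq> L"
  have "scale s z \<in> ideal_times scale L" if "z \<in> ideal_times scale K" for z
    using that
  proof (induct rule: ideal_times_induct)
    case subspace show ?case by (rule subspace_scale_preimage[OF subspace_ideal_times])
  next
    case (scale a m) then show ?case using sK scale_in_ideal_times by auto
  qed
  then show "scale s ` ideal_times scale K \<subseteq> ideal_times scale L" by blast
qed

lemma S_prime_condition_from_colonR:
  assumes mm: "multiplication_module scale" and P: "subspace P"
    and s: "\<forall>a b. a * b \<in> colonR scale P \<longrightarrow> s * a \<in> colonR scale P \<or> s * b \<in> colonR scale P"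
    and am: "scale a m \<in> P"
  shows "s * a \<in> colonR scale P \<or> scale s m \<in> P"
proof (cases "s * a \<in> colonR scale P")
  case False
  have sc: "s * c \<in> colonR scale P" if "c \<in> colonR scale (span {m})" for c
  proof -
    have "scale (a * c) x \<in> P" for x
    proof -
      obtain k where "scale c x = scale k m"
        using \<open>c \<in> colonR scale (span {m})\<close> unfolding colonR_def span_singleton by blast
      then have "scale (a * c) x = scale k (scale a m)" by (metis scale_left_commute scale_scale)
      then show ?thesis using subspace_scale[OF P am, of k] by simp
    qed
    then have "a * c \<in> colonR scale P" unfolding colonR_def by simp
    then show ?thesis using s False by blast
  qed
  have "m \<in> ideal_times scale (colonR scale (span {m}))"
    using ideal_times_colonR[OF mm, of "span {m}"] span_base[of m "{m}"] by simp
  then have "scale s m \<in> P"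
  proof (induct rule: ideal_times_induct)
    case subspace show ?case by (rule subspace_scale_preimage[OF P])
  next
    case (scale c y) then show ?case using sc unfolding colonR_def by simp
  qed
  then show ?thesis ..
qed simp

lemma S_prime_iff_colonR:
  assumes mm: "multiplication_module scale" and P: "subspace P"
  shows "S_prime scale S P \<longleftrightarrow> S_prime (*) S (colonR scale P)"
proof -
  let ?Q = "colonR scale P"
  have "(\<forall>a m. scale a m \<in> P \<longrightarrow> s * a \<in> ?Q \<or> scale s m \<in> P) \<longleftrightarrow>
        (\<forall>a b. a * b \<in> ?Q \<longrightarrow> s * a \<in> ?Q \<or> s * b \<in> ?Q)" for s
  proof
    assume H: "\<forall>a m. scale a m \<in> P \<longrightarrow> s * a \<in> ?Q \<or> scale s m \<in> P"
    show "\<forall>a b. a * b \<in> ?Q \<longrightarrow> s * a \<in> ?Q \<or> s * b \<in> ?Q"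
    proof (intro allI impI)
      fix a b assume ab: "a * b \<in> ?Q"
      show "s * a \<in> ?Q \<or> s * b \<in> ?Q"
      proof (cases "s * a \<in> ?Q")
        case False
        have "scale s (scale b m) \<in> P" for m
          using H[rule_format, of a "scale b m"] ab False by (auto simp: colonR_def)
        then show ?thesis unfolding colonR_def by simp
      qed simp
    qed
  qed (use S_prime_condition_from_colonR[OF mm P] in blast)
  moreover have "is_ideal ?Q" by (rule is_ideal_colonR[OF P])
  moreover from this have "colonR (*) ?Q = ?Q" by (rule colonR_mult)
  ultimately show ?thesis unfolding S_prime_def using P by (simp add: is_ideal_def)
qed

lemma colonR_colonM: "colonR scale (colonM scale N I) = colonM (*) (colonR scale N) I"
  unfolding colonR_def colonM_def by (auto simp: mult.commute)

lemma S_copure_iff_colonR: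
  assumes fg: "fin_gen scale" and ff: "faithful scale" and mm: "multiplication_module scale"
    and P: "subspace P"
  shows "S_copure scale S P \<longleftrightarrow> S_copure (*) S (colonR scale P)"
proof -
  let ?Q = "colonR scale P"
  have "scale s ` colonM scale P I \<subseteq> {x + y | x y. x \<in> P \<and> y \<in> colonM scale {0} I} \<longleftrightarrow>
        (*) s ` colonM (*) ?Q I \<subseteq> {x + y | x y. x \<in> ?Q \<and> y \<in> colonM (*) {0} I}" for s I
  proof -
    have ideal_colonM: "is_ideal (colonM (*) J I)" if "is_ideal J" for J :: "'a set"
      using module.subspace_colonM[OF module_mult] that by (simp add: is_ideal_def)
    have ideal_times_colonM: "colonM scale N I = ideal_times scale (colonM (*) (colonR scale N) I)"
      if "subspace N" for N
      using ideal_times_colonR[OF mm subspace_colonM[OF that]] by (simp add: colonR_colonM)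
    have Q: "is_ideal ?Q" by (rule is_ideal_colonR[OF P])
    have zero: "is_ideal (colonR scale {0})" "colonR scale {0} = {0}"
      using ff is_ideal_colonR[of "{0}"] by (auto simp: faithful_def)
    have "{x + y | x y. x \<in> P \<and> y \<in> colonM scale {0} I} =
          ideal_times scale {x + y | x y. x \<in> ?Q \<and> y \<in> colonM (*) {0} I}"
      using ideal_times_set_plus[OF Q ideal_colonM[OF zero(1)]] ideal_times_colonR[OF mm P]
        ideal_times_colonM[of "{0}"] zero(2) by simp
    moreover have "is_ideal {x + y | x y. x \<in> ?Q \<and> y \<in> colonM (*) {0} I}"
      using module.subspace_set_plus[OF module_mult] Q ideal_colonM[OF zero(1)] zero(2)
      by (simp add: is_ideal_def)
    ultimately show ?thesis
      using ideal_times_colonM[OF P] scale_image_ideal_times_subset_iff[OF fg ff mm ideal_colonM[OF Q]]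
      by simp
  qed
  then show ?thesis unfolding S_copure_def using P is_ideal_colonR[OF P] by (simp add: is_ideal_def)
qed

end

theorem theorem3p6:
  fixes sc :: "'a::comm_ring_1 \<Rightarrow> 'b::ab_group_add \<Rightarrow> 'b"
    and S I :: "'a set"
  assumes "module sc"
    and "mcs S"
    and "fin_gen sc"
    and "faithful sc"
    and "multiplication_module sc"
    and "is_ideal I"
  shows "S_quasi_copure sc S (ideal_times sc I) \<longleftrightarrow> S_quasi_copure ((*) :: 'a \<Rightarrow> 'a \<Rightarrow> 'a) S I"
proof -
  interpret module sc by fact
  note fg = \<open>fin_gen sc\<close> and ff = \<open>faithful sc\<close> and mm = \<open>multiplication_module sc\<close>
  have S_prime_is_ideal: "is_ideal Q" if "S_prime (*) S Q" for Q
    using that by (simp add: S_prime_def is_ideal_def)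
  have "S_quasi_copure sc S (ideal_times sc I) \<longleftrightarrow>
        (\<forall>P. subspace P \<longrightarrow> S_prime sc S P \<and> ideal_times sc I \<subseteq> P \<longrightarrow> S_copure sc S P)"
    unfolding S_quasi_copure_def S_prime_def using subspace_ideal_times by blast
  also have "\<dots> \<longleftrightarrow> (\<forall>Q. is_ideal Q \<longrightarrow>
      S_prime sc S (ideal_times sc Q) \<and> ideal_times sc I \<subseteq> ideal_times sc Q \<longrightarrow>
      S_copure sc S (ideal_times sc Q))"
    by (rule all_subspaces_iff_all_ideal_times[OF mm])
  also have "\<dots> \<longleftrightarrow> (\<forall>Q. is_ideal Q \<longrightarrow> S_prime (*) S Q \<and> I \<subseteq> Q \<longrightarrow> S_copure (*) S Q)"
    using S_prime_iff_colonR[OF mm subspace_ideal_times] S_copure_iff_colonR[OF fg ff mm subspace_ideal_times]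
      colonR_ideal_times[OF fg ff mm] ideal_times_subset_iff[OF fg ff mm \<open>is_ideal I\<close>] by simp
  also have "\<dots> \<longleftrightarrow> S_quasi_copure (*) S I"
    unfolding S_quasi_copure_def using \<open>is_ideal I\<close> S_prime_is_ideal by (auto simp: is_ideal_def)
  finally show ?thesis .
qed

end
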